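(* Let $G=D\times L$ be a locally compact second countable group, with $D$ discrete, and identify $L$ with $\{1\}\times L$. Then the map $\mathcal{C}(G)\to\mathcal{C}(L)$, $H\mapsto H\cap L$, is continuous.
   Context: For a locally compact group $G$, $\mathcal{C}(G)$ is the set of closed subgroups of $G$ with the Chabauty topology, generated by the sets $\{H:H\cap K=\emptyset\}$ ($K\subset G$ compact) and $\{H:H\cap U\neq\emptyset\}$ ($U\subset G$ open). *)

theory Defs
  imports "HOL-Analysis.Analysis" "HOL-Library.Product_Plus"
begin

text \<open>Groups are written additively via the (not necessarily commutative) class group_add.\<close>

definition closed_subgroup :: "'a::{topological_space, group_add} set \<Rightarrow> bool" where
  "closed_subgroup H \<longleftrightarrow> closed H \<and> 0 \<in> H \<and> (\<forall>x\<in>H. \<forall>y\<in>H. x + y \<in> H) \<and> (\<forall>x\<in>H. - x \<in> H)"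

definition chabauty :: "'a::{topological_space, group_add} set topology" where
  "chabauty = subtopology
     (topology_generated_by
        ({{H. H \<inter> K = {}} | K. compact K} \<union> {{H. H \<inter> U \<noteq> {}} | U. open U}))
     {H. closed_subgroup H}"

end

theory Submission
  imports Defs
begin

text \<open>The intersection with \<open>L\<close> is the pullback \<open>H \<mapsto> \<iota>\<^sup>-\<^sup>1(H)\<close> along the embedding
  \<open>\<iota> l = (0, l)\<close>. Pullback along any continuous homomorphism \<open>\<iota>\<close> maps closed subgroups to
  closed subgroups, and the pullbacks of the subbasic sets are again subbasic:
  \<open>\<iota>\<^sup>-\<^sup>1(H) \<inter> K = {}\<close> iff \<open>H \<inter> \<iota>(K) = {}\<close>, and \<open>\<iota>\<^sup>-\<^sup>1(H) \<inter> U \<noteq> {}\<close> iff \<open>H \<inter> \<iota>(U) \<noteq> {}\<close>,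
  where \<open>\<iota>(K)\<close> is compact by continuity and \<open>\<iota>(U) = {0} \<times> U\<close> is open because \<open>D\<close> is discrete.\<close>

definition fell_subbasis :: "'a::topological_space set set set" where
  "fell_subbasis = {{H. H \<inter> K = {}} | K. compact K} \<union> {{H. H \<inter> U \<noteq> {}} | U. open U}"

lemma fell_subbasis_miss: "compact K \<Longrightarrow> {H. H \<inter> K = {}} \<in> fell_subbasis"
  unfolding fell_subbasis_def by blast

lemma fell_subbasis_hit: "open U \<Longrightarrow> {H. H \<inter> U \<noteq> {}} \<in> fell_subbasis"
  unfolding fell_subbasis_def by blast

lemma Union_fell_subbasis [simp]: "\<Union> fell_subbasis = UNIV"
  using fell_subbasis_miss [of "{}"] by auto

lemma chabauty_eq_subtopology_fell:
  "chabauty = subtopology (topology_generated_by fell_subbasis) {H. closed_subgroup H}"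
  by (simp add: chabauty_def fell_subbasis_def)

lemma continuous_map_fell_vimage:
  fixes g :: "'a::topological_space \<Rightarrow> 'b::topological_space"
  assumes cont: "continuous_on UNIV g" and open_map: "\<And>U. open U \<Longrightarrow> open (g ` U)"
  shows "continuous_map (topology_generated_by fell_subbasis) (topology_generated_by fell_subbasis)
           (\<lambda>H. g -` H)"
proof (rule continuous_on_generated_topo)
  fix S :: "'a set set"
  assume "S \<in> fell_subbasis"
  then consider K where "S = {H. H \<inter> K = {}}" "compact K"
    | U where "S = {H. H \<inter> U \<noteq> {}}" "open U"
    unfolding fell_subbasis_def by blast
  then have "(\<lambda>H. g -` H) -` S \<in> fell_subbasis"
  proof cases
    case (1 K)
    then have "(\<lambda>H. g -` H) -` S = {H. H \<inter> g ` K = {}}" by auto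
    moreover have "compact (g ` K)"
      using \<open>compact K\<close> cont by (blast intro: compact_continuous_image continuous_on_subset)
    ultimately show ?thesis by (simp add: fell_subbasis_miss)
  next
    case (2 U)
    then have "(\<lambda>H. g -` H) -` S = {H. H \<inter> g ` U \<noteq> {}}" by auto
    moreover have "open (g ` U)" using \<open>open U\<close> by (rule open_map)
    ultimately show ?thesis by (simp add: fell_subbasis_hit)
  qed
  then show "openin (topology_generated_by fell_subbasis)
      ((\<lambda>H. g -` H) -` S \<inter> topspace (topology_generated_by fell_subbasis))"
    by (simp add: topology_generated_by_Basis)
qed simp

lemma closed_subgroup_vimage:
  fixes g :: "'a::{topological_space, group_add} \<Rightarrow> 'b::{topological_space, group_add}"
  assumes H: "closed_subgroup H" and cont: "continuous_on UNIV g"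
    and add: "\<And>x y. g (x + y) = g x + g y"
  shows "closed_subgroup (g -` H)"
proof -
  have "g 0 + g 0 = g 0 + 0"
    using add [of 0 0] by simp
  then have zero: "g 0 = 0"
    by (rule add_left_imp_eq)
  have minus: "g (- x) = - g x" for x
  proof -
    have "g x + g (- x) = 0"
      using add [of x "- x"] zero by simp
    then show ?thesis
      by (rule minus_unique [symmetric])
  qed
  have "closed (g -` H)"
    using H cont unfolding closed_subgroup_def by (simp add: closed_vimage)
  then show ?thesis
    using H unfolding closed_subgroup_def by (simp add: zero minus add)
qed

lemma continuous_map_chabauty_vimage:
  fixes g :: "'a::{topological_space, group_add} \<Rightarrow> 'b::{topological_space, group_add}"
  assumes cont: "continuous_on UNIV g" and open_map: "\<And>U. open U \<Longrightarrow> open (g ` U)"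
    and add: "\<And>x y. g (x + y) = g x + g y"
  shows "continuous_map chabauty chabauty (\<lambda>H. g -` H)"
  unfolding chabauty_eq_subtopology_fell
proof (rule continuous_map_into_subtopology)
  show "continuous_map (subtopology (topology_generated_by fell_subbasis) {H. closed_subgroup H})
      (topology_generated_by fell_subbasis) (\<lambda>H. g -` H)"
    using continuous_map_fell_vimage [OF cont open_map] by (rule continuous_map_from_subtopology)
  show "(\<lambda>H. g -` H) \<in> topspace (subtopology (topology_generated_by fell_subbasis)
      {H. closed_subgroup H}) \<rightarrow> {H. closed_subgroup H}"
    using closed_subgroup_vimage [OF _ cont add] by (simp add: Pi_iff)
qed

theorem lemma3:
  assumes "locally_compact_space (euclidean :: ('d::{discrete_topology, topological_group_add, second_countable_topology} \<times> 'l::{topological_group_add, t2_space, second_countable_topology}) topology)"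
  shows "continuous_map (chabauty :: ('d \<times> 'l) set topology) (chabauty :: 'l set topology)
           (\<lambda>H. {l. (0, l) \<in> H})"
proof -
  have "continuous_on UNIV (Pair (0::'d) :: 'l \<Rightarrow> 'd \<times> 'l)"
    by (intro continuous_intros)
  moreover have "open (Pair (0::'d) ` U)" if "open U" for U :: "'l set"
  proof -
    have "Pair (0::'d) ` U = {0} \<times> U" by auto
    then show ?thesis using that by (simp add: open_Times open_discrete)
  qed
  moreover have "Pair (0::'d) (x + y) = Pair 0 x + Pair 0 y" for x y :: 'l
    by simp
  ultimately have "continuous_map chabauty chabauty (\<lambda>H. Pair (0::'d) -` H :: 'l set)"
    by (rule continuous_map_chabauty_vimage)
  moreover have "(\<lambda>H. Pair (0::'d) -` H :: 'l set) = (\<lambda>H. {l. (0, l) \<in> H})"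
    by auto
  ultimately show ?thesis by simp
qed

end
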